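(* Let $n\ge2$, $\kappa\ge1$ and $G\in\mathcal G_{[n;\kappa]}$ with structure vector $V_G\in\mathbb R^{n\kappa^n}$. Then $G$ is skew-symmetric if and only if $$V_G=V_G\left(P_\sigma\otimes \mathrm{sgn}(\sigma)T_\sigma\right)\quad\text{for all }\sigma\in\mathbf S_n.$$
   Context: $\delta_m^j$ is the $j$-th column of $I_m$, $\mathbf 1_m$ the all-ones column vector of length $m$. For $\sigma\in\mathbf S_n$, $P_\sigma=[\delta_n^{\sigma(1)},\dots,\delta_n^{\sigma(n)}]\in\mathbb R^{n\times n}$. For $i=1,\dots,n$, $\Phi_i=\mathbf 1_{\kappa^{i-1}}^T\otimes I_\kappa\otimes\mathbf 1_{\kappa^{n-i}}^T\in\mathbb R^{\kappa\times\kappa^n}$. The Khatri–Rao product of $A\in\mathbb R^{p\times m}$ and $B\in\mathbb R^{q\times m}$ is $A*B=[\mathrm{Col}_1(A)\otimes\mathrm{Col}_1(B),\dots,\mathrm{Col}_m(A)\otimes\mathrm{Col}_m(B)]$, and $T_\sigma=\Phi_{\sigma^{-1}(1)}*\cdots*\Phi_{\sigma^{-1}(n)}\in\mathbb R^{\kappa^n\times\kappa^n}$. A finite game $G\in\mathcal G_{[n;\kappa]}$ has players $\{1,\dots,n\}$, each with strategy set $\{1,\dots,\kappa\}$, strategy $j$ identified with $\delta_\kappa^j$, and payoffs $c_i$; $V_i^c\in\mathbb R^{\kappa^n}$ is the unique row vector with $c_i(x_1,\dots,x_n)=V_i^c(x_1\otimes\cdots\otimes x_n)$, and $V_G=[V_1^c,\dots,V_n^c]$.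 $G$ is skew-symmetric if for every $\sigma\in\mathbf S_n$, every $i$ and every profile, $c_i(x_1,\dots,x_n)=\mathrm{sgn}(\sigma)\,c_{\sigma(i)}(x_{\sigma^{-1}(1)},\dots,x_{\sigma^{-1}(n)})$. *)

theory Defs
  imports "Jordan_Normal_Form.Matrix" "HOL-Combinatorics.Permutations" "HOL-Library.FuncSet"
begin

(* Matrices are Jordan_Normal_Form matrices; column vectors are m x 1 matrices,
   row vectors are 1 x m matrices. Indices in the paper are 1-based; JNF entries are 0-based. *)

definition kron :: "real mat \<Rightarrow> real mat \<Rightarrow> real mat" where
  "kron A B = mat (dim_row A * dim_row B) (dim_col A * dim_col B)
     (\<lambda>(i,j). A $$ (i div dim_row B, j div dim_col B) * B $$ (i mod dim_row B, j mod dim_col B))"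

definition kron_list :: "real mat list \<Rightarrow> real mat" where
  "kron_list As = foldl kron (hd As) (tl As)"

definition khatri_rao :: "real mat \<Rightarrow> real mat \<Rightarrow> real mat" where
  "khatri_rao A B = mat (dim_row A * dim_row B) (dim_col A)
     (\<lambda>(i,j). A $$ (i div dim_row B, j) * B $$ (i mod dim_row B, j))"

definition khatri_rao_list :: "real mat list \<Rightarrow> real mat" where
  "khatri_rao_list As = foldl khatri_rao (hd As) (tl As)"

(* delta_m^j, j-th column of I_m (1-based j), as an m x 1 matrix *)
definition delta :: "nat \<Rightarrow> nat \<Rightarrow> real mat" where
  "delta m j = mat m 1 (\<lambda>(i,_). if i + 1 = j then 1 else 0)"

definition ones :: "nat \<Rightarrow> real mat" where
  "ones m = mat m 1 (\<lambda>_. 1)"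

(* P_sigma = [delta_n^{sigma(1)}, ..., delta_n^{sigma(n)}] *)
definition perm_mat :: "nat \<Rightarrow> (nat \<Rightarrow> nat) \<Rightarrow> real mat" where
  "perm_mat n \<sigma> = mat n n (\<lambda>(i,j). if i + 1 = \<sigma> (j + 1) then 1 else 0)"

definition Phi :: "nat \<Rightarrow> nat \<Rightarrow> nat \<Rightarrow> real mat" where
  "Phi \<kappa> n i = kron (kron (transpose_mat (ones (\<kappa> ^ (i - 1)))) (one_mat \<kappa>))
                      (transpose_mat (ones (\<kappa> ^ (n - i))))"

definition T_mat :: "nat \<Rightarrow> nat \<Rightarrow> (nat \<Rightarrow> nat) \<Rightarrow> real mat" where
  "T_mat \<kappa> n \<sigma> = khatri_rao_list (map (\<lambda>k. Phi \<kappa> n (Hilbert_Choice.inv \<sigma> k)) [1..<n+1])"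

definition profiles :: "nat \<Rightarrow> nat \<Rightarrow> (nat \<Rightarrow> nat) set" where
  "profiles n \<kappa> = PiE {1..n} (\<lambda>_. {1..\<kappa>})"

(* x_1 \<otimes> ... \<otimes> x_n with x_k identified with delta_kappa^{x k} *)
definition profile_vec :: "nat \<Rightarrow> nat \<Rightarrow> (nat \<Rightarrow> nat) \<Rightarrow> real mat" where
  "profile_vec n \<kappa> x = kron_list (map (\<lambda>k. delta \<kappa> (x k)) [1..<n+1])"

(* A game in G_[n;kappa] is given by its payoffs c i x (player i, profile x).
   V_i^c: the unique row vector with c_i(x) = V_i^c (x_1 \<otimes> ... \<otimes> x_n). *)
definition struct_row :: "nat \<Rightarrow> nat \<Rightarrow> (nat \<Rightarrow> (nat \<Rightarrow> nat) \<Rightarrow> real) \<Rightarrow> nat \<Rightarrow> real mat" where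
  "struct_row n \<kappa> c i = (THE v. v \<in> carrier_mat 1 (\<kappa> ^ n) \<and>
      (\<forall>x \<in> profiles n \<kappa>. (v * profile_vec n \<kappa> x) $$ (0,0) = c i x))"

definition struct_vec :: "nat \<Rightarrow> nat \<Rightarrow> (nat \<Rightarrow> (nat \<Rightarrow> nat) \<Rightarrow> real) \<Rightarrow> real mat" where
  "struct_vec n \<kappa> c = mat 1 (n * \<kappa> ^ n)
     (\<lambda>(_,j). struct_row n \<kappa> c (j div \<kappa> ^ n + 1) $$ (0, j mod \<kappa> ^ n))"

definition skew_symmetric :: "nat \<Rightarrow> nat \<Rightarrow> (nat \<Rightarrow> (nat \<Rightarrow> nat) \<Rightarrow> real) \<Rightarrow> bool" where
  "skew_symmetric n \<kappa> c \<longleftrightarrow>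
     (\<forall>\<sigma>. \<sigma> permutes {1..n} \<longrightarrow> (\<forall>i \<in> {1..n}. \<forall>x \<in> profiles n \<kappa>.
        c i x = real_of_int (sign \<sigma>) * c (\<sigma> i) (\<lambda>j. x (Hilbert_Choice.inv \<sigma> j))))"

end

theory Submission
  imports Defs
begin

text \<open>Read coordinate r of a vector of length \<open>\<kappa> ^ n\<close> as the strategy profile formed by the
  base-\<open>\<kappa>\<close> digits of r. Then \<open>x\<^sub>1 \<otimes> \<dots> \<otimes> x\<^sub>n\<close> is the unit vector at x, so \<open>V\<^sub>G\<close> has entry
  \<open>c i x\<close> at position (i, x), while \<open>P\<^sub>\<sigma> \<otimes> T\<^sub>\<sigma>\<close> is the permutation matrix moving position
  \<open>(\<sigma> i, x \<circ> inv \<sigma>)\<close> to (i, x). So the entry of \<open>V\<^sub>G (P\<^sub>\<sigma> \<otimes> sgn \<sigma> T\<^sub>\<sigma>)\<close> at (i, x) is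
  \<open>sgn \<sigma> * c (\<sigma> i) (x \<circ> inv \<sigma>)\<close>, and comparing entries is exactly the definition of
  skew-symmetry.\<close>

definition index_profile :: "nat \<Rightarrow> nat \<Rightarrow> nat \<Rightarrow> nat \<Rightarrow> nat" where
  "index_profile n \<kappa> r = (\<lambda>k\<in>{1..n}. r div \<kappa> ^ (n - k) mod \<kappa> + 1)"

lemma div_div_power_diff:
  fixes r \<kappa> :: nat
  assumes "k \<le> m"
  shows "r div \<kappa> div \<kappa> ^ (m - k) = r div \<kappa> ^ (Suc m - k)"
  using assms by (simp add: Suc_diff_le div_mult2_eq)

lemma eq_if_base_digits_eq:
  fixes r s \<kappa> :: nat
  assumes "r < \<kappa> ^ m" and "s < \<kappa> ^ m"
    and "\<And>k. k \<in> {1..m} \<Longrightarrow> r div \<kappa> ^ (m - k) mod \<kappa> = s div \<kappa> ^ (m - k) mod \<kappa>"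
  shows "r = s"
  using assms
proof (induction m arbitrary: r s)
  case 0
  then show ?case by simp
next
  case (Suc m)
  have "\<kappa> > 0"
    using Suc.prems(1) by (cases "\<kappa> = 0") auto
  have "r div \<kappa> = s div \<kappa>"
  proof (rule Suc.IH)
    show "r div \<kappa> < \<kappa> ^ m" "s div \<kappa> < \<kappa> ^ m"
      using Suc.prems(1,2) \<open>\<kappa> > 0\<close> by (simp_all add: div_less_iff_less_mult mult.commute)
    show "r div \<kappa> div \<kappa> ^ (m - k) mod \<kappa> = s div \<kappa> div \<kappa> ^ (m - k) mod \<kappa>" if "k \<in> {1..m}" for k
      using Suc.prems(3)[of k] that by (simp add: div_div_power_diff)
  qed
  moreover have "r mod \<kappa> = s mod \<kappa>"
    using Suc.prems(3)[of "Suc m"] by simp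
  ultimately show ?case
    by (metis div_mult_mod_eq)
qed

lemma index_profile_in_profiles: "\<kappa> \<ge> 1 \<Longrightarrow> index_profile n \<kappa> r \<in> profiles n \<kappa>"
  by (auto simp: index_profile_def profiles_def Suc_le_eq)

lemma inj_on_index_profile: "inj_on (index_profile n \<kappa>) {..<\<kappa> ^ n}"
proof (rule inj_onI)
  fix r s assume "r \<in> {..<\<kappa> ^ n}" "s \<in> {..<\<kappa> ^ n}"
    and eq: "index_profile n \<kappa> r = index_profile n \<kappa> s"
  then show "r = s"
  proof (intro eq_if_base_digits_eq[of r \<kappa> n s])
    show "r div \<kappa> ^ (n - k) mod \<kappa> = s div \<kappa> ^ (n - k) mod \<kappa>" if "k \<in> {1..n}" for k
      using fun_cong[OF eq, of k] that by (simp add: index_profile_def)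
  qed simp_all
qed

lemma bij_betw_index_profile:
  assumes "\<kappa> \<ge> 1"
  shows "bij_betw (index_profile n \<kappa>) {..<\<kappa> ^ n} (profiles n \<kappa>)"
proof -
  have "finite (profiles n \<kappa>)" and "card (profiles n \<kappa>) = \<kappa> ^ n"
    by (simp_all add: profiles_def finite_PiE card_PiE)
  moreover have "index_profile n \<kappa> ` {..<\<kappa> ^ n} \<subseteq> profiles n \<kappa>"
    using index_profile_in_profiles[OF assms] by blast
  ultimately have "index_profile n \<kappa> ` {..<\<kappa> ^ n} = profiles n \<kappa>"
    using inj_on_index_profile by (metis card_image card_lessThan card_subset_eq)
  then show ?thesis
    using inj_on_index_profile by (simp add: bij_betw_def)
qed

lemma profile_eq_index_profile:
  assumes "\<kappa> \<ge> 1" and "x \<in> profiles n \<kappa>"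
  obtains r where "r < \<kappa> ^ n" and "x = index_profile n \<kappa> r"
proof -
  have "x \<in> index_profile n \<kappa> ` {..<\<kappa> ^ n}"
    using bij_betw_imp_surj_on[OF bij_betw_index_profile[OF assms(1)]] assms(2) by simp
  then show ?thesis
    using that by blast
qed

lemma permute_profile_in_profiles:
  assumes "\<sigma> permutes {1..n}" and "x \<in> profiles n \<kappa>"
  shows "(\<lambda>j. x (\<sigma> j)) \<in> profiles n \<kappa>"
  using assms permutes_in_image[OF assms(1)] permutes_not_in[OF assms(1)]
  by (auto simp: profiles_def PiE_def extensional_def Pi_def)

lemma block_index_less:
  fixes N :: nat
  assumes "i \<in> {1..n}" and "r < N"
  shows "(i - 1) * N + r < n * N"
proof -
  have "(i - 1) * N + r < (i - 1) * N + N"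
    using assms(2) by simp
  also have "\<dots> = i * N"
    using assms(1) by (cases i) auto
  also have "\<dots> \<le> n * N"
    using assms(1) by simp
  finally show ?thesis .
qed

lemma ball_block_index_iff:
  fixes P :: "nat \<Rightarrow> (nat \<Rightarrow> nat) \<Rightarrow> bool"
  assumes "\<kappa> \<ge> 1"
  shows "(\<forall>j < n * \<kappa> ^ n. P (j div \<kappa> ^ n + 1) (index_profile n \<kappa> (j mod \<kappa> ^ n)))
    \<longleftrightarrow> (\<forall>i\<in>{1..n}. \<forall>x\<in>profiles n \<kappa>. P i x)"
proof
  assume all_j: "\<forall>j < n * \<kappa> ^ n. P (j div \<kappa> ^ n + 1) (index_profile n \<kappa> (j mod \<kappa> ^ n))"
  show "\<forall>i\<in>{1..n}. \<forall>x\<in>profiles n \<kappa>. P i x"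
  proof (intro ballI)
    fix i x assume i: "i \<in> {1..n}" and x: "x \<in> profiles n \<kappa>"
    obtain r where r: "r < \<kappa> ^ n" "x = index_profile n \<kappa> r"
      using profile_eq_index_profile[OF assms x] .
    have "P (((i - 1) * \<kappa> ^ n + r) div \<kappa> ^ n + 1) (index_profile n \<kappa> (((i - 1) * \<kappa> ^ n + r) mod \<kappa> ^ n))"
      using all_j block_index_less[OF i r(1)] by blast
    then show "P i x"
      using r i assms by simp
  qed
next
  assume "\<forall>i\<in>{1..n}. \<forall>x\<in>profiles n \<kappa>. P i x"
  moreover have "j div \<kappa> ^ n + 1 \<in> {1..n}" if "j < n * \<kappa> ^ n" for j
    using less_mult_imp_div_less[OF that] by simp
  ultimately show "\<forall>j < n * \<kappa> ^ n. P (j div \<kappa> ^ n + 1) (index_profile n \<kappa> (j mod \<kappa> ^ n))"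
    using index_profile_in_profiles[OF assms] by blast
qed

lemma index_profile_eq_iff:
  assumes "y \<in> extensional {1..n}"
  shows "index_profile n \<kappa> r = y \<longleftrightarrow> (\<forall>k\<in>{1..n}. r div \<kappa> ^ (n - k) mod \<kappa> + 1 = y k)"
  using assms by (auto simp: index_profile_def extensional_def fun_eq_iff)

lemma prod_of_bool:
  "finite A \<Longrightarrow> (\<Prod>k\<in>A. of_bool (P k) :: 'a::comm_semiring_1) = of_bool (\<forall>k\<in>A. P k)"
  by (induction A rule: finite_induct) auto

lemma khatri_rao_list_upt_Suc:
  assumes "n \<ge> 1"
  shows "khatri_rao_list (map f [1..<Suc n + 1]) = khatri_rao (khatri_rao_list (map f [1..<n+1])) (f (Suc n))"
proof -
  have "map f [1..<Suc n + 1] = map f [1..<n+1] @ [f (Suc n)]"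
    by simp
  moreover obtain A As where "map f [1..<n+1] = A # As"
    using assms by (cases "map f [1..<n+1]") auto
  ultimately show ?thesis
    by (simp add: khatri_rao_list_def)
qed

lemma khatri_rao_list_upt_carrier:
  assumes "n \<ge> 1" and "\<And>k. k \<in> {1..n} \<Longrightarrow> f k \<in> carrier_mat \<kappa> C"
  shows "khatri_rao_list (map f [1..<n+1]) \<in> carrier_mat (\<kappa> ^ n) C"
  using assms
proof (induction n rule: nat_induct_at_least)
  case base
  then show ?case by (simp add: khatri_rao_list_def)
next
  case (Suc n)
  have "dim_row (f (Suc n)) = \<kappa>"
    using Suc.prems[of "Suc n"] by simp
  with Suc show ?case
    unfolding khatri_rao_list_upt_Suc[OF Suc.hyps(1)]
    by (simp add: khatri_rao_def mult.commute del: upt_Suc)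
qed

lemma index_khatri_rao_list_upt:
  assumes "n \<ge> 1" and "\<And>k. k \<in> {1..n} \<Longrightarrow> f k \<in> carrier_mat \<kappa> C"
    and "r < \<kappa> ^ n" and "c < C"
  shows "khatri_rao_list (map f [1..<n+1]) $$ (r, c) = (\<Prod>k\<in>{1..n}. f k $$ (r div \<kappa> ^ (n - k) mod \<kappa>, c))"
  using assms
proof (induction n arbitrary: r rule: nat_induct_at_least)
  case base
  then show ?case by (simp add: khatri_rao_list_def)
next
  case (Suc n)
  let ?A = "khatri_rao_list (map f [1..<n+1])"
  have "\<kappa> > 0"
    using Suc.prems(2) by (cases "\<kappa> = 0") auto
  have A: "?A \<in> carrier_mat (\<kappa> ^ n) C"
    using Suc.hyps Suc.prems(1) by (intro khatri_rao_list_upt_carrier) auto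
  have r: "r div \<kappa> < \<kappa> ^ n"
    using Suc.prems(2) \<open>\<kappa> > 0\<close> by (simp add: div_less_iff_less_mult mult.commute)
  have "khatri_rao_list (map f [1..<Suc n + 1]) $$ (r, c) = ?A $$ (r div \<kappa>, c) * f (Suc n) $$ (r mod \<kappa>, c)"
    unfolding khatri_rao_list_upt_Suc[OF Suc.hyps(1)]
    using A Suc.prems(1)[of "Suc n"] Suc.prems(2,3) r
    by (simp add: khatri_rao_def mult.commute del: upt_Suc)
  also have "?A $$ (r div \<kappa>, c) = (\<Prod>k\<in>{1..n}. f k $$ (r div \<kappa> div \<kappa> ^ (n - k) mod \<kappa>, c))"
    using Suc.IH[OF _ r] Suc.prems by simp
  also have "\<dots> = (\<Prod>k\<in>{1..n}. f k $$ (r div \<kappa> ^ (Suc n - k) mod \<kappa>, c))"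
    by (intro prod.cong) (simp_all add: div_div_power_diff)
  finally show ?case
    by (simp add: prod.cl_ivl_Suc)
qed

lemma kron_eq_khatri_rao_if_col:
  "dim_col A = 1 \<Longrightarrow> dim_col B = 1 \<Longrightarrow> kron A B = khatri_rao A B"
  by (rule eq_matI) (auto simp: kron_def khatri_rao_def)

lemma foldl_kron_eq_foldl_khatri_rao:
  "dim_col A = 1 \<Longrightarrow> (\<And>B. B \<in> set Bs \<Longrightarrow> dim_col B = 1) \<Longrightarrow> foldl kron A Bs = foldl khatri_rao A Bs"
  by (induction Bs arbitrary: A) (simp_all add: kron_eq_khatri_rao_if_col khatri_rao_def)

lemma kron_list_eq_khatri_rao_list:
  "(\<And>A. A \<in> set As \<Longrightarrow> dim_col A = 1) \<Longrightarrow> kron_list As = khatri_rao_list As"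
  by (cases As) (simp_all add: kron_list_def khatri_rao_list_def foldl_kron_eq_foldl_khatri_rao)

lemma profile_vec_eq_khatri_rao_list:
  "profile_vec n \<kappa> x = khatri_rao_list (map (\<lambda>k. delta \<kappa> (x k)) [1..<n+1])"
  unfolding profile_vec_def by (rule kron_list_eq_khatri_rao_list) (auto simp: delta_def)

lemma profile_vec_carrier: "n \<ge> 1 \<Longrightarrow> profile_vec n \<kappa> x \<in> carrier_mat (\<kappa> ^ n) 1"
  unfolding profile_vec_eq_khatri_rao_list
  by (rule khatri_rao_list_upt_carrier) (simp_all add: delta_def)

lemma index_profile_vec:
  assumes "n \<ge> 1" and "r < \<kappa> ^ n" and "x \<in> profiles n \<kappa>"
  shows "profile_vec n \<kappa> x $$ (r, 0) = of_bool (index_profile n \<kappa> r = x)"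
proof -
  have "0 < \<kappa> ^ n"
    using assms(2) by (rule le_less_trans[OF le0])
  then have "\<kappa> \<noteq> 0"
    using assms(1) by auto
  have "profile_vec n \<kappa> x $$ (r, 0) = (\<Prod>k\<in>{1..n}. delta \<kappa> (x k) $$ (r div \<kappa> ^ (n - k) mod \<kappa>, 0))"
    unfolding profile_vec_eq_khatri_rao_list
    using assms by (intro index_khatri_rao_list_upt[where C = 1]) (simp_all add: delta_def)
  also have "\<dots> = (\<Prod>k\<in>{1..n}. of_bool (r div \<kappa> ^ (n - k) mod \<kappa> + 1 = x k))"
    using \<open>\<kappa> \<noteq> 0\<close> by (intro prod.cong) (simp_all add: delta_def)
  also have "\<dots> = of_bool (index_profile n \<kappa> r = x)"
    using assms(3) by (simp add: prod_of_bool index_profile_eq_iff profiles_def PiE_def)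
  finally show ?thesis .
qed

lemma power_split_at:
  fixes \<kappa> :: nat
  assumes "i \<in> {1..n}"
  shows "\<kappa> ^ (i - 1) * \<kappa> * \<kappa> ^ (n - i) = \<kappa> ^ n"
proof -
  have "\<kappa> ^ (i - 1) * \<kappa> * \<kappa> ^ (n - i) = \<kappa> ^ (i - 1 + 1 + (n - i))"
    by (simp add: power_add)
  also have "i - 1 + 1 + (n - i) = n"
    using assms by auto
  finally show ?thesis .
qed

lemma Phi_carrier: "i \<in> {1..n} \<Longrightarrow> Phi \<kappa> n i \<in> carrier_mat \<kappa> (\<kappa> ^ n)"
  using power_split_at[of i n \<kappa>] by (simp add: Phi_def kron_def ones_def)

lemma index_Phi:
  assumes "i \<in> {1..n}" and "a < \<kappa>" and "q < \<kappa> ^ n"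
  shows "Phi \<kappa> n i $$ (a, q) = of_bool (a = q div \<kappa> ^ (n - i) mod \<kappa>)"
proof -
  have q1: "q div \<kappa> ^ (n - i) < \<kappa> ^ (i - 1) * \<kappa>"
    using assms(3) power_split_at[OF assms(1), of \<kappa>] by (simp add: less_mult_imp_div_less)
  then have q2: "q div \<kappa> ^ (n - i) div \<kappa> < \<kappa> ^ (i - 1)"
    by (simp add: less_mult_imp_div_less)
  from assms q1 q2 power_split_at[OF assms(1), of \<kappa>] show ?thesis
    by (simp add: Phi_def kron_def ones_def)
qed

lemma T_mat_carrier:
  assumes "n \<ge> 1" and "\<sigma> permutes {1..n}"
  shows "T_mat \<kappa> n \<sigma> \<in> carrier_mat (\<kappa> ^ n) (\<kappa> ^ n)"
  unfolding T_mat_def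
proof (rule khatri_rao_list_upt_carrier[OF assms(1)])
  fix k assume "k \<in> {1..n}"
  then have "Hilbert_Choice.inv \<sigma> k \<in> {1..n}"
    using permutes_in_image[OF permutes_inv[OF assms(2)]] by blast
  then show "Phi \<kappa> n (Hilbert_Choice.inv \<sigma> k) \<in> carrier_mat \<kappa> (\<kappa> ^ n)"
    by (rule Phi_carrier)
qed

lemma index_T_mat:
  assumes n: "n \<ge> 1" and \<sigma>: "\<sigma> permutes {1..n}" and r: "r < \<kappa> ^ n" and q: "q < \<kappa> ^ n"
  shows "T_mat \<kappa> n \<sigma> $$ (r, q) =
    of_bool (index_profile n \<kappa> r = (\<lambda>j. index_profile n \<kappa> q (Hilbert_Choice.inv \<sigma> j)))"
proof -
  have inv_in: "Hilbert_Choice.inv \<sigma> k \<in> {1..n}" if "k \<in> {1..n}" for k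
    using that permutes_in_image[OF permutes_inv[OF \<sigma>]] by blast
  have "0 < \<kappa> ^ n"
    using r by (rule le_less_trans[OF le0])
  then have \<kappa>: "\<kappa> \<ge> 1"
    using n by auto
  have "T_mat \<kappa> n \<sigma> $$ (r, q) =
      (\<Prod>k\<in>{1..n}. Phi \<kappa> n (Hilbert_Choice.inv \<sigma> k) $$ (r div \<kappa> ^ (n - k) mod \<kappa>, q))"
    unfolding T_mat_def using n r q inv_in Phi_carrier by (intro index_khatri_rao_list_upt) auto
  also have "\<dots> = (\<Prod>k\<in>{1..n}.
      of_bool (r div \<kappa> ^ (n - k) mod \<kappa> = q div \<kappa> ^ (n - Hilbert_Choice.inv \<sigma> k) mod \<kappa>))"
    using \<kappa> q inv_in by (intro prod.cong refl index_Phi) auto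
  also have "\<dots> = of_bool (index_profile n \<kappa> r = (\<lambda>j. index_profile n \<kappa> q (Hilbert_Choice.inv \<sigma> j)))"
  proof -
    have "(\<lambda>j. index_profile n \<kappa> q (Hilbert_Choice.inv \<sigma> j)) \<in> profiles n \<kappa>"
      using permute_profile_in_profiles[OF permutes_inv[OF \<sigma>] index_profile_in_profiles[OF \<kappa>]] .
    then show ?thesis
      using inv_in by (simp add: prod_of_bool index_profile_eq_iff profiles_def PiE_def)
        (simp add: index_profile_def)
  qed
  finally show ?thesis .
qed

lemma index_mult_row_single:
  assumes "v \<in> carrier_mat 1 m" and "K \<in> carrier_mat m m'" and "j < m'" and "a < m"
    and "\<And>b. b < m \<Longrightarrow> b \<noteq> a \<Longrightarrow> K $$ (b, j) = 0"
  shows "(v * K) $$ (0, j) = v $$ (0, a) * K $$ (a, j)"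
proof -
  have "(v * K) $$ (0, j) = (\<Sum>b\<in>{0..<m}. v $$ (0, b) * K $$ (b, j))"
    using assms(1-3) by (simp add: index_mult_mat scalar_prod_def)
  also have "\<dots> = v $$ (0, a) * K $$ (a, j)"
    using assms(4,5) by (subst sum.remove[of _ a]) (auto intro!: sum.neutral)
  finally show ?thesis .
qed

lemma mult_profile_vec_index_profile:
  assumes n: "n \<ge> 1" and v: "v \<in> carrier_mat 1 (\<kappa> ^ n)" and r: "r < \<kappa> ^ n"
  shows "(v * profile_vec n \<kappa> (index_profile n \<kappa> r)) $$ (0, 0) = v $$ (0, r)"
proof -
  have "0 < \<kappa> ^ n"
    using r by (rule le_less_trans[OF le0])
  then have x: "index_profile n \<kappa> r \<in> profiles n \<kappa>"
    using n by (intro index_profile_in_profiles) auto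
  have "(v * profile_vec n \<kappa> (index_profile n \<kappa> r)) $$ (0, 0) =
      v $$ (0, r) * profile_vec n \<kappa> (index_profile n \<kappa> r) $$ (r, 0)"
  proof (rule index_mult_row_single[OF v profile_vec_carrier[OF n]])
    show "profile_vec n \<kappa> (index_profile n \<kappa> r) $$ (b, 0) = 0" if "b < \<kappa> ^ n" "b \<noteq> r" for b
      using that r by (simp add: index_profile_vec[OF n _ x] inj_on_eq_iff[OF inj_on_index_profile])
  qed (use r in simp_all)
  also have "\<dots> = v $$ (0, r)"
    by (simp add: index_profile_vec[OF n r x])
  finally show ?thesis .
qed

lemma struct_row_eq:
  assumes n: "n \<ge> 1" and \<kappa>: "\<kappa> \<ge> 1"
  shows "struct_row n \<kappa> c i = mat 1 (\<kappa> ^ n) (\<lambda>(_, r). c i (index_profile n \<kappa> r))"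
  unfolding struct_row_def
proof (rule the_equality)
  let ?w = "mat 1 (\<kappa> ^ n) (\<lambda>(_, r). c i (index_profile n \<kappa> r))"
  have "(?w * profile_vec n \<kappa> x) $$ (0, 0) = c i x" if x: "x \<in> profiles n \<kappa>" for x
  proof -
    obtain r where r: "r < \<kappa> ^ n" and x_eq: "x = index_profile n \<kappa> r"
      using profile_eq_index_profile[OF \<kappa> x] .
    have "?w \<in> carrier_mat 1 (\<kappa> ^ n)"
      by simp
    from mult_profile_vec_index_profile[OF n this r] r show ?thesis
      unfolding x_eq by simp
  qed
  then show "?w \<in> carrier_mat 1 (\<kappa> ^ n) \<and> (\<forall>x\<in>profiles n \<kappa>. (?w * profile_vec n \<kappa> x) $$ (0, 0) = c i x)"
    by simp
next
  fix v
  assume "v \<in> carrier_mat 1 (\<kappa> ^ n) \<and> (\<forall>x\<in>profiles n \<kappa>. (v * profile_vec n \<kappa> x) $$ (0, 0) = c i x)"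
  then have v: "v \<in> carrier_mat 1 (\<kappa> ^ n)"
    and v_rep: "\<And>x. x \<in> profiles n \<kappa> \<Longrightarrow> (v * profile_vec n \<kappa> x) $$ (0, 0) = c i x"
    by auto
  show "v = mat 1 (\<kappa> ^ n) (\<lambda>(_, r). c i (index_profile n \<kappa> r))" (is "_ = ?w")
  proof (rule eq_matI)
    fix a r assume "a < dim_row ?w" "r < dim_col ?w"
    then have "a = 0" and r: "r < \<kappa> ^ n"
      by auto
    have "v $$ (0, r) = (v * profile_vec n \<kappa> (index_profile n \<kappa> r)) $$ (0, 0)"
      using mult_profile_vec_index_profile[OF n v r] by simp
    also have "\<dots> = c i (index_profile n \<kappa> r)"
      by (rule v_rep[OF index_profile_in_profiles[OF \<kappa>]])
    finally show "v $$ (a, r) = ?w $$ (a, r)"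
      using \<open>a = 0\<close> r by simp
  qed (use v in auto)
qed

lemma index_struct_vec:
  assumes "n \<ge> 1" and "\<kappa> \<ge> 1" and "j < n * \<kappa> ^ n"
  shows "struct_vec n \<kappa> c $$ (0, j) = c (j div \<kappa> ^ n + 1) (index_profile n \<kappa> (j mod \<kappa> ^ n))"
proof -
  have "j mod \<kappa> ^ n < \<kappa> ^ n"
    using assms(2) by simp
  with assms show ?thesis
    by (simp add: struct_vec_def struct_row_eq)
qed

lemma index_kron_perm_mat_T_mat:
  assumes n: "n \<ge> 1" and \<sigma>: "\<sigma> permutes {1..n}" and b: "b < n * \<kappa> ^ n" and j: "j < n * \<kappa> ^ n"
  shows "kron (perm_mat n \<sigma>) (s \<cdot>\<^sub>m T_mat \<kappa> n \<sigma>) $$ (b, j) =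
    of_bool (b div \<kappa> ^ n + 1 = \<sigma> (j div \<kappa> ^ n + 1)) *
    (s * of_bool (index_profile n \<kappa> (b mod \<kappa> ^ n) =
                   (\<lambda>t. index_profile n \<kappa> (j mod \<kappa> ^ n) (Hilbert_Choice.inv \<sigma> t))))"
proof -
  have "0 < \<kappa> ^ n"
    using b by (cases "\<kappa> ^ n = 0") auto
  then have "b mod \<kappa> ^ n < \<kappa> ^ n" "j mod \<kappa> ^ n < \<kappa> ^ n"
    by simp_all
  moreover have "b div \<kappa> ^ n < n" "j div \<kappa> ^ n < n"
    using b j by (simp_all add: less_mult_imp_div_less)
  ultimately show ?thesis
    using b j T_mat_carrier[OF n \<sigma>, of \<kappa>]
    by (simp add: kron_def perm_mat_def index_T_mat[OF n \<sigma>])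
qed

lemma index_struct_vec_mult_kron:
  assumes n: "n \<ge> 1" and \<kappa>: "\<kappa> \<ge> 1" and \<sigma>: "\<sigma> permutes {1..n}" and j: "j < n * \<kappa> ^ n"
  shows "(struct_vec n \<kappa> c * kron (perm_mat n \<sigma>) (s \<cdot>\<^sub>m T_mat \<kappa> n \<sigma>)) $$ (0, j) =
    s * c (\<sigma> (j div \<kappa> ^ n + 1)) (\<lambda>t. index_profile n \<kappa> (j mod \<kappa> ^ n) (Hilbert_Choice.inv \<sigma> t))"
proof -
  let ?N = "\<kappa> ^ n"
  let ?V = "struct_vec n \<kappa> c"
  let ?K = "kron (perm_mat n \<sigma>) (s \<cdot>\<^sub>m T_mat \<kappa> n \<sigma>)"
  define i where "i = \<sigma> (j div ?N + 1)"
  define y where "y = (\<lambda>t. index_profile n \<kappa> (j mod ?N) (Hilbert_Choice.inv \<sigma> t))"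
  have "0 < ?N"
    using \<kappa> by simp
  have "j div ?N + 1 \<in> {1..n}"
    using less_mult_imp_div_less[OF j] by simp
  then have i: "i \<in> {1..n}"
    unfolding i_def using permutes_in_image[OF \<sigma>] by blast
  have "y \<in> profiles n \<kappa>"
    unfolding y_def using permute_profile_in_profiles[OF permutes_inv[OF \<sigma>] index_profile_in_profiles[OF \<kappa>]] .
  then obtain r where r: "r < ?N" and y_eq: "y = index_profile n \<kappa> r"
    using profile_eq_index_profile[OF \<kappa>] by blast
  define a where "a = (i - 1) * ?N + r"
  have a: "a < n * ?N"
    unfolding a_def using block_index_less[OF i r] .
  have a_div: "a div ?N + 1 = i" and a_mod: "a mod ?N = r"
    using i r \<open>0 < ?N\<close> by (auto simp: a_def)
  have V: "?V \<in> carrier_mat 1 (n * ?N)"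
    by (simp add: struct_vec_def)
  have K: "?K \<in> carrier_mat (n * ?N) (n * ?N)"
    using T_mat_carrier[OF n \<sigma>, of \<kappa>] by (simp add: kron_def perm_mat_def)
  have K_col: "?K $$ (b, j) = of_bool (b div ?N + 1 = i) * (s * of_bool (index_profile n \<kappa> (b mod ?N) = y))"
    if "b < n * ?N" for b
    using index_kron_perm_mat_T_mat[OF n \<sigma> that j] by (simp add: i_def y_def)
  have "(?V * ?K) $$ (0, j) = ?V $$ (0, a) * ?K $$ (a, j)"
  proof (rule index_mult_row_single[OF V K j a])
    fix b assume b: "b < n * ?N" "b \<noteq> a"
    show "?K $$ (b, j) = 0"
    proof (rule ccontr)
      assume "?K $$ (b, j) \<noteq> 0"
      then have "b div ?N + 1 = i" and "index_profile n \<kappa> (b mod ?N) = index_profile n \<kappa> r"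
        using K_col[OF b(1)] y_eq by (auto split: if_splits)
      then have "b div ?N = i - 1" and "b mod ?N = r"
        using r \<open>0 < ?N\<close> by (auto simp: inj_on_eq_iff[OF inj_on_index_profile])
      then have "b = a"
        using div_mult_mod_eq[of b ?N] by (simp add: a_def)
      with b(2) show False ..
    qed
  qed
  also have "\<dots> = s * c i y"
    using index_struct_vec[OF n \<kappa> a] K_col[OF a] a_div a_mod y_eq by simp
  finally show ?thesis
    by (simp add: i_def y_def)
qed

lemma struct_vec_fixed_iff:
  assumes n: "n \<ge> 1" and \<kappa>: "\<kappa> \<ge> 1" and \<sigma>: "\<sigma> permutes {1..n}"
  shows "struct_vec n \<kappa> c = struct_vec n \<kappa> c * kron (perm_mat n \<sigma>) (s \<cdot>\<^sub>m T_mat \<kappa> n \<sigma>)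
    \<longleftrightarrow> (\<forall>i\<in>{1..n}. \<forall>x\<in>profiles n \<kappa>. c i x = s * c (\<sigma> i) (\<lambda>j. x (Hilbert_Choice.inv \<sigma> j)))"
    (is "?V = ?V * ?K \<longleftrightarrow> _")
proof -
  have V: "?V \<in> carrier_mat 1 (n * \<kappa> ^ n)"
    by (simp add: struct_vec_def)
  have K: "?K \<in> carrier_mat (n * \<kappa> ^ n) (n * \<kappa> ^ n)"
    using T_mat_carrier[OF n \<sigma>, of \<kappa>] by (simp add: kron_def perm_mat_def)
  have "?V = ?V * ?K \<longleftrightarrow> (\<forall>j < n * \<kappa> ^ n. ?V $$ (0, j) = (?V * ?K) $$ (0, j))"
    using V K by (auto simp: mat_eq_iff)
  also have "\<dots> \<longleftrightarrow> (\<forall>j < n * \<kappa> ^ n.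
      c (j div \<kappa> ^ n + 1) (index_profile n \<kappa> (j mod \<kappa> ^ n)) =
      s * c (\<sigma> (j div \<kappa> ^ n + 1)) (\<lambda>t. index_profile n \<kappa> (j mod \<kappa> ^ n) (Hilbert_Choice.inv \<sigma> t)))"
    by (simp add: index_struct_vec[OF n \<kappa>] index_struct_vec_mult_kron[OF n \<kappa> \<sigma>])
  also have "\<dots> \<longleftrightarrow> (\<forall>i\<in>{1..n}. \<forall>x\<in>profiles n \<kappa>. c i x = s * c (\<sigma> i) (\<lambda>j. x (Hilbert_Choice.inv \<sigma> j)))"
    by (rule ball_block_index_iff[OF \<kappa>])
  finally show ?thesis .
qed

theorem theorem3p17:
  fixes n \<kappa> :: nat and c :: "nat \<Rightarrow> (nat \<Rightarrow> nat) \<Rightarrow> real"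
  assumes "n \<ge> 2" and "\<kappa> \<ge> 1"
  shows "skew_symmetric n \<kappa> c \<longleftrightarrow>
    (\<forall>\<sigma>. \<sigma> permutes {1..n} \<longrightarrow>
       struct_vec n \<kappa> c = struct_vec n \<kappa> c *
         kron (perm_mat n \<sigma>) (real_of_int (sign \<sigma>) \<cdot>\<^sub>m T_mat \<kappa> n \<sigma>))"
proof -
  have "n \<ge> 1"
    using assms(1) by simp
  then show ?thesis
    unfolding skew_symmetric_def by (simp add: struct_vec_fixed_iff[OF _ assms(2)])
qed

end
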